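(* In the model described in the context, suppose that for some time slot $t\in\{0,\dots,T-1\}$ and some data item $m$ the set $\mathcal{B}_t(m)$ is non-empty. Then $\hat{x}_t>0$, where $$\hat{x}_t=\arg\min_{0\le x\le S_{\min}}\ \mathbb{E}\Bigl[C\Bigl(L_{t-1}+\sum_{j=1}^M\sum_{k\in\mathcal{B}_t(j)}x\Bigr)+C\Bigl(L_t-\sum_{j=1}^M\sum_{k\in\mathcal{B}_t(j)}x\,I_{k,t}(j)\Bigr)\Bigr].$$
   Context: There are $N$ users, $M$ data items and a period of $T$ time slots. Item $m$ has size $S(m)>0$, and $S_{\min}=\min_m S(m)$. For each user $n$ and slot $t$ there is a demand profile $\mathbf{P}_{n,t}=(P_{n,t}(m))_{m=1}^M$ with $P_{n,t}(m)\ge0$ and $\sum_m P_{n,t}(m)\le 1$, periodic in $t$ with period $T$. The demand is modeled by $\{0,1\}$-valued random variables $I_{n,t}(m)$ with $\Pr(I_{n,t}(m)=1)=P_{n,t}(m)$ and $\sum_m I_{n,t}(m)\le1$. Demands of distinct users in the same slot are independent. The load is $L_t=\sum_{m,n}S(m)I_{n,t}(m)$. Slot indices are taken modulo $T$, so $L_{-1}$ means $L_{T-1}$. The cost function $C:\mathbb{R}_+\to\mathbb{R}_+$ is smooth, strictly convex and monotonically increasing, with derivative $C'$. The set of active users is $\mathcal{B}_t(m)=\{n:\mathbb{E}[I_{n,t}(m)C'(L_t)-C'(L_{t-1})]>0\}$. *)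

theory Defs
  imports "HOL-Probability.Probability"
begin

text \<open>Users are indexed by n < N, items by m < M, slots by t < T.
  The demand indicator of user n for item m in slot t is I n t m, a random
  variable on the probability space Mu.\<close>

definition strictly_convex_on :: "real set \<Rightarrow> (real \<Rightarrow> real) \<Rightarrow> bool" where
  "strictly_convex_on S f \<longleftrightarrow> convex S \<and>
    (\<forall>x\<in>S. \<forall>y\<in>S. x \<noteq> y \<longrightarrow> (\<forall>u>0. \<forall>v>0. u + v = 1 \<longrightarrow>
        f (u * x + v * y) < u * f x + v * f y))"

definition load :: "nat \<Rightarrow> nat \<Rightarrow> (nat \<Rightarrow> real) \<Rightarrow> (nat \<Rightarrow> nat \<Rightarrow> nat \<Rightarrow> 'a \<Rightarrow> real) \<Rightarrow> nat \<Rightarrow> 'a \<Rightarrow> real" where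
  "load N M S I t \<omega> = (\<Sum>m<M. \<Sum>n<N. S m * I n t m \<omega>)"

text \<open>Previous slot, modulo T (so slot 0 is preceded by slot T-1).\<close>
definition prev_slot :: "nat \<Rightarrow> nat \<Rightarrow> nat" where
  "prev_slot T t = (t + T - 1) mod T"

definition active_set :: "'a measure \<Rightarrow> nat \<Rightarrow> nat \<Rightarrow> nat \<Rightarrow> (nat \<Rightarrow> real) \<Rightarrow> (real \<Rightarrow> real)
    \<Rightarrow> (nat \<Rightarrow> nat \<Rightarrow> nat \<Rightarrow> 'a \<Rightarrow> real) \<Rightarrow> nat \<Rightarrow> nat \<Rightarrow> nat set" where
  "active_set Mu N M T S C' I t m =
     {n \<in> {..<N}. (\<integral>\<omega>. I n t m \<omega> * C' (load N M S I t \<omega>)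
                          - C' (load N M S I (prev_slot T t) \<omega>) \<partial>Mu) > 0}"

definition objective :: "'a measure \<Rightarrow> nat \<Rightarrow> nat \<Rightarrow> nat \<Rightarrow> (nat \<Rightarrow> real) \<Rightarrow> (real \<Rightarrow> real) \<Rightarrow> (real \<Rightarrow> real)
    \<Rightarrow> (nat \<Rightarrow> nat \<Rightarrow> nat \<Rightarrow> 'a \<Rightarrow> real) \<Rightarrow> nat \<Rightarrow> real \<Rightarrow> real" where
  "objective Mu N M T S C C' I t x =
     (\<integral>\<omega>. C (load N M S I (prev_slot T t) \<omega>
               + (\<Sum>j<M. \<Sum>k\<in>active_set Mu N M T S C' I t j. x))
          + C (load N M S I t \<omega>
               - (\<Sum>j<M. \<Sum>k\<in>active_set Mu N M T S C' I t j. x * I k t j \<omega>)) \<partial>Mu)"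

end

theory Submission
  imports Defs
begin

text \<open>Write \<open>A\<close> and \<open>L\<close> for the loads of the previous and the current slot, \<open>K\<close> for the
  number of active pairs \<open>(k, j)\<close> and \<open>s\<close> for their realised demand, so that the objective is
  \<open>f x = E[C(A + x K) + C(L - x s)]\<close>. As \<open>S\<^sub>m\<^sub>i\<^sub>n s \<le> L\<close>, both arguments stay nonnegative for
  \<open>0 \<le> x \<le> S\<^sub>m\<^sub>i\<^sub>n\<close>, so \<open>f\<close> is continuous there and attains its minimum. The tangent inequality
  of the convex \<open>C\<close> at the shifted points gives \<open>f x - f 0 \<le> x g x\<close> with
  \<open>g x = E[K C'(A + x K) - s C'(L - x s)]\<close>, and \<open>-g 0\<close> is the sum over active pairs of
  \<open>E[I\<^sub>k\<^sub>,\<^sub>t(j) C'(L) - C'(A)] > 0\<close>. By continuity \<open>g x < 0\<close> for some small \<open>x > 0\<close>, hence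
  \<open>f x < f 0\<close> and \<open>0\<close> is not a minimiser.\<close>

lemma strictly_convex_on_imp_convex_on:
  assumes "strictly_convex_on S f"
  shows "convex_on S f"
proof (rule convex_onI)
  show "convex S"
    using assms unfolding strictly_convex_on_def by simp
  fix t x y :: real
  assume "0 < t" "t < 1" "x \<in> S" "y \<in> S"
  with assms have "x \<noteq> y \<Longrightarrow> f ((1 - t) * x + t * y) < (1 - t) * f x + t * f y"
    unfolding strictly_convex_on_def by auto
  then show "f ((1 - t) *\<^sub>R x + t *\<^sub>R y) \<le> (1 - t) * f x + t * f y"
    by (cases "x = y") (auto simp: algebra_simps)
qed

lemma convex_on_diff_le_deriv_mult:
  fixes f :: "real \<Rightarrow> real"
  assumes "convex_on {0..} f"
    and "(f has_real_derivative d) (at c within {0..})"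
    and "0 < c" "0 \<le> y"
  shows "f c - f y \<le> d * (c - y)"
proof -
  have "d * (y - c) \<le> f y - f c"
    by (rule convex_on_imp_above_tangent[OF assms(1) _ _ _ assms(2)])
      (use assms(3,4) in \<open>auto simp: interior_real_atLeast\<close>)
  then show ?thesis
    by (simp add: algebra_simps)
qed

lemma continuous_on_integral_param:
  fixes F :: "'b::metric_space \<Rightarrow> 'a \<Rightarrow> real"
  assumes M: "finite_measure M"
    and meas: "\<And>x. x \<in> X \<Longrightarrow> F x \<in> borel_measurable M"
    and bound: "\<And>x \<omega>. x \<in> X \<Longrightarrow> \<omega> \<in> space M \<Longrightarrow> \<bar>F x \<omega>\<bar> \<le> B"
    and cont: "\<And>\<omega>. \<omega> \<in> space M \<Longrightarrow> continuous_on X (\<lambda>x. F x \<omega>)"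
  shows "continuous_on X (\<lambda>x. \<integral>\<omega>. F x \<omega> \<partial>M)"
proof (rule continuous_on_sequentiallyI)
  fix u x assume u: "\<forall>n. u n \<in> X" and x: "x \<in> X" and lim: "u \<longlonglongrightarrow> x"
  show "(\<lambda>n. \<integral>\<omega>. F (u n) \<omega> \<partial>M) \<longlonglongrightarrow> (\<integral>\<omega>. F x \<omega> \<partial>M)"
  proof (rule integral_dominated_convergence[where w="\<lambda>_. B"])
    show "AE \<omega> in M. (\<lambda>n. F (u n) \<omega>) \<longlonglongrightarrow> F x \<omega>"
      using continuous_on_tendsto_compose[OF cont lim x] u by (auto intro!: AE_I2)
  qed (use meas bound u x finite_measure.integrable_const[OF M] in \<open>auto intro!: AE_I2\<close>)
qed

lemma
  fixes h :: "real \<Rightarrow> real" and u v w :: "'a \<Rightarrow> real"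
  assumes M: "finite_measure M"
    and meas: "u \<in> borel_measurable M" "v \<in> borel_measurable M" "w \<in> borel_measurable M"
    and h: "continuous_on {0..} h"
    and range: "\<And>x \<omega>. x \<in> X \<Longrightarrow> \<omega> \<in> space M \<Longrightarrow> u \<omega> + x * v \<omega> \<in> {0..R}"
    and w: "\<And>\<omega>. \<omega> \<in> space M \<Longrightarrow> \<bar>w \<omega>\<bar> \<le> W"
  shows integrable_weighted_affine_comp: "x \<in> X \<Longrightarrow> integrable M (\<lambda>\<omega>. w \<omega> * h (u \<omega> + x * v \<omega>))"
    and continuous_on_integral_weighted_affine_comp:
      "continuous_on X (\<lambda>x. \<integral>\<omega>. w \<omega> * h (u \<omega> + x * v \<omega>) \<partial>M)"
proof -
  obtain H where H: "\<And>y. y \<in> {0..R} \<Longrightarrow> \<bar>h y\<bar> \<le> H"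
  proof -
    have "compact (h ` {0..R})"
      by (intro compact_continuous_image continuous_on_subset[OF h]) auto
    then show ?thesis
      using that by (metis compact_imp_bounded bounded_iff image_eqI real_norm_def)
  qed
  \<comment> \<open>\<open>h\<close> is only continuous on \<open>[0, \<infinity>)\<close>; clamping its argument makes it Borel on all of \<open>\<real>\<close>.\<close>
  have clamped: "(\<lambda>y. h (max 0 y)) \<in> borel_measurable borel"
    by (intro borel_measurable_continuous_onI continuous_on_compose2[OF h]) (auto intro!: continuous_intros)
  have F_meas: "(\<lambda>\<omega>. w \<omega> * h (u \<omega> + x * v \<omega>)) \<in> borel_measurable M" if "x \<in> X" for x
  proof -
    have "(\<lambda>\<omega>. w \<omega> * h (max 0 (u \<omega> + x * v \<omega>))) \<in> borel_measurable M"
      using measurable_compose[OF _ clamped] meas by measurable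
    moreover have "\<And>\<omega>. \<omega> \<in> space M \<Longrightarrow> max 0 (u \<omega> + x * v \<omega>) = u \<omega> + x * v \<omega>"
      using range[OF that] by auto
    ultimately show ?thesis
      by (simp cong: measurable_cong)
  qed
  have F_bound: "\<bar>w \<omega> * h (u \<omega> + x * v \<omega>)\<bar> \<le> W * H" if "x \<in> X" "\<omega> \<in> space M" for x \<omega>
    using w[OF that(2)] H[OF range[OF that]] by (simp add: abs_mult mult_mono')
  show "integrable M (\<lambda>\<omega>. w \<omega> * h (u \<omega> + x * v \<omega>))" if "x \<in> X"
    using F_meas[OF that] F_bound[OF that]
    by (intro finite_measure.integrable_const_bound[OF M]) auto
  show "continuous_on X (\<lambda>x. \<integral>\<omega>. w \<omega> * h (u \<omega> + x * v \<omega>) \<partial>M)"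
  proof (rule continuous_on_integral_param[OF M F_meas F_bound])
    fix \<omega> assume "\<omega> \<in> space M"
    then show "continuous_on X (\<lambda>x. w \<omega> * h (u \<omega> + x * v \<omega>))"
      using range by (intro continuous_intros continuous_on_compose2[OF h]) auto
  qed
qed

lemma is_arg_min_Icc_pos:
  fixes f :: "real \<Rightarrow> real"
  assumes "continuous_on {0..a} f" "0 < x" "x \<le> a" "f x < f 0"
  shows "(\<exists>z. is_arg_min f (\<lambda>y. 0 \<le> y \<and> y \<le> a) z)
    \<and> (\<forall>z. is_arg_min f (\<lambda>y. 0 \<le> y \<and> y \<le> a) z \<longrightarrow> 0 < z)"
proof
  obtain z where "z \<in> {0..a}" "\<forall>y\<in>{0..a}. f z \<le> f y"
    using continuous_attains_inf[OF compact_Icc _ assms(1)] assms(2,3) by auto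
  then show "\<exists>z. is_arg_min f (\<lambda>y. 0 \<le> y \<and> y \<le> a) z"
    by (auto simp: is_arg_min_def not_less)
  show "\<forall>z. is_arg_min f (\<lambda>y. 0 \<le> y \<and> y \<le> a) z \<longrightarrow> 0 < z"
  proof (intro allI impI)
    fix z assume "is_arg_min f (\<lambda>y. 0 \<le> y \<and> y \<le> a) z"
    then have "0 \<le> z" "\<not> f x < f z"
      using assms(2,3) by (auto simp: is_arg_min_def)
    with assms(4) show "0 < z"
      by (cases "z = 0") auto
  qed
qed

locale load_shift = finite_measure M
  for M :: "'a measure" +
  fixes A L s :: "'a \<Rightarrow> real" and K a R :: real and C C' :: "real \<Rightarrow> real"
  assumes measurable: "A \<in> borel_measurable M" "L \<in> borel_measurable M" "s \<in> borel_measurable M"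
    and a_pos: "0 < a" and K_pos: "0 < K"
    and A_range: "\<And>\<omega>. \<omega> \<in> space M \<Longrightarrow> 0 \<le> A \<omega> \<and> A \<omega> \<le> R"
    and L_le: "\<And>\<omega>. \<omega> \<in> space M \<Longrightarrow> L \<omega> \<le> R"
    and s_range: "\<And>\<omega>. \<omega> \<in> space M \<Longrightarrow> 0 \<le> s \<omega> \<and> s \<omega> \<le> K"
    and a_s_le_L: "\<And>\<omega>. \<omega> \<in> space M \<Longrightarrow> a * s \<omega> \<le> L \<omega>"
    and convex: "convex_on {0..} C"
    and deriv: "\<And>x. 0 \<le> x \<Longrightarrow> (C has_real_derivative C' x) (at x within {0..})"
    and C'_cont: "continuous_on {0..} C'"
begin

definition shift_cost :: "real \<Rightarrow> real" where
  "shift_cost x = (\<integral>\<omega>. C (A \<omega> + x * K) + C (L \<omega> - x * s \<omega>) \<partial>M)"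

definition shift_slope :: "real \<Rightarrow> real" where
  "shift_slope x = (\<integral>\<omega>. K * C' (A \<omega> + x * K) - s \<omega> * C' (L \<omega> - x * s \<omega>) \<partial>M)"

lemma shifted_loads_range:
  assumes "x \<in> {0..a}" "\<omega> \<in> space M"
  shows "A \<omega> + x * K \<in> {0..R + a * K}" "L \<omega> + x * - s \<omega> \<in> {0..R + a * K}"
proof -
  have "0 \<le> x * K" "x * K \<le> a * K" "0 \<le> x * s \<omega>" "x * s \<omega> \<le> a * s \<omega>"
    using assms K_pos s_range[OF assms(2)] by (auto intro: mult_right_mono)
  then show "A \<omega> + x * K \<in> {0..R + a * K}" "L \<omega> + x * - s \<omega> \<in> {0..R + a * K}"
    using A_range[OF assms(2)] L_le[OF assms(2)] a_s_le_L[OF assms(2)] by auto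
qed

lemma C_cont: "continuous_on {0..} C"
  using deriv by (intro DERIV_continuous_on) auto

lemma
  fixes w :: "'a \<Rightarrow> real" and h :: "real \<Rightarrow> real"
  assumes "w \<in> borel_measurable M" "\<And>\<omega>. \<omega> \<in> space M \<Longrightarrow> \<bar>w \<omega>\<bar> \<le> W"
    and "continuous_on {0..} h"
  shows integrable_shifted_prev: "x \<in> {0..a} \<Longrightarrow> integrable M (\<lambda>\<omega>. w \<omega> * h (A \<omega> + x * K))"
    and integrable_shifted_cur: "x \<in> {0..a} \<Longrightarrow> integrable M (\<lambda>\<omega>. w \<omega> * h (L \<omega> - x * s \<omega>))"
    and continuous_on_shifted_prev: "continuous_on {0..a} (\<lambda>x. \<integral>\<omega>. w \<omega> * h (A \<omega> + x * K) \<partial>M)"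
    and continuous_on_shifted_cur: "continuous_on {0..a} (\<lambda>x. \<integral>\<omega>. w \<omega> * h (L \<omega> - x * s \<omega>) \<partial>M)"
proof -
  have M: "finite_measure M"
    by intro_locales
  note weighted = integrable_weighted_affine_comp[where X="{0..a}", OF M]
    continuous_on_integral_weighted_affine_comp[where X="{0..a}", OF M]
  show "x \<in> {0..a} \<Longrightarrow> integrable M (\<lambda>\<omega>. w \<omega> * h (A \<omega> + x * K))"
    "continuous_on {0..a} (\<lambda>x. \<integral>\<omega>. w \<omega> * h (A \<omega> + x * K) \<partial>M)"
    using weighted[OF measurable(1) borel_measurable_const assms(1,3) shifted_loads_range(1) assms(2)]
    by auto
  show "x \<in> {0..a} \<Longrightarrow> integrable M (\<lambda>\<omega>. w \<omega> * h (L \<omega> - x * s \<omega>))"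
    "continuous_on {0..a} (\<lambda>x. \<integral>\<omega>. w \<omega> * h (L \<omega> - x * s \<omega>) \<partial>M)"
    using weighted[OF measurable(2) borel_measurable_uminus[OF measurable(3)] assms(1,3)
        shifted_loads_range(2) assms(2)]
    by auto
qed

lemma
  assumes "x \<in> {0..a}"
  shows integrable_shift_cost_prev: "integrable M (\<lambda>\<omega>. C (A \<omega> + x * K))"
    and integrable_shift_cost_cur: "integrable M (\<lambda>\<omega>. C (L \<omega> - x * s \<omega>))"
    and integrable_shift_slope_prev: "integrable M (\<lambda>\<omega>. K * C' (A \<omega> + x * K))"
    and integrable_shift_slope_cur: "integrable M (\<lambda>\<omega>. s \<omega> * C' (L \<omega> - x * s \<omega>))"
  using integrable_shifted_prev[of "\<lambda>_. 1" 1 C x] integrable_shifted_cur[of "\<lambda>_. 1" 1 C x]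
    integrable_shifted_prev[of "\<lambda>_. K" K C' x] integrable_shifted_cur[of s K C' x]
    assms C_cont C'_cont K_pos s_range measurable(3)
  by auto

lemma continuous_on_shift_cost: "continuous_on {0..a} shift_cost"
proof (rule continuous_on_eq)
  show "continuous_on {0..a} (\<lambda>x. (\<integral>\<omega>. C (A \<omega> + x * K) \<partial>M) + (\<integral>\<omega>. C (L \<omega> - x * s \<omega>) \<partial>M))"
    using continuous_on_shifted_prev[of "\<lambda>_. 1" 1 C] continuous_on_shifted_cur[of "\<lambda>_. 1" 1 C] C_cont
    by (simp add: continuous_on_add)
qed (simp add: shift_cost_def integrable_shift_cost_prev integrable_shift_cost_cur)

lemma continuous_on_shift_slope: "continuous_on {0..a} shift_slope"
proof (rule continuous_on_eq)
  show "continuous_on {0..a}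
      (\<lambda>x. (\<integral>\<omega>. K * C' (A \<omega> + x * K) \<partial>M) - (\<integral>\<omega>. s \<omega> * C' (L \<omega> - x * s \<omega>) \<partial>M))"
    using continuous_on_shifted_prev[of "\<lambda>_. K" K C'] continuous_on_shifted_cur[of s K C']
      C'_cont K_pos s_range measurable(3)
    by (simp add: continuous_on_diff)
qed (simp add: shift_slope_def
    Bochner_Integration.integral_diff[OF integrable_shift_slope_prev integrable_shift_slope_cur])

lemma shift_cost_diff_le:
  assumes "0 < x" "x < a"
  shows "shift_cost x - shift_cost 0 \<le> x * shift_slope x"
proof -
  have pointwise: "C (A \<omega> + x * K) + C (L \<omega> - x * s \<omega>) - (C (A \<omega>) + C (L \<omega>))
      \<le> x * (K * C' (A \<omega> + x * K) - s \<omega> * C' (L \<omega> - x * s \<omega>))" if "\<omega> \<in> space M" for \<omega>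
  proof -
    note \<omega> = A_range[OF that] s_range[OF that] a_s_le_L[OF that]
    have A_shifted: "0 < A \<omega> + x * K"
      using assms K_pos \<omega> by (simp add: add_nonneg_pos)
    then have "C (A \<omega> + x * K) - C (A \<omega>) \<le> C' (A \<omega> + x * K) * (x * K)"
      using convex_on_diff_le_deriv_mult[OF convex deriv, of "A \<omega> + x * K" "A \<omega>"] \<omega> by simp
    moreover have "C (L \<omega> - x * s \<omega>) - C (L \<omega>) \<le> C' (L \<omega> - x * s \<omega>) * (- x * s \<omega>)"
    proof (cases "s \<omega> = 0")
      case False
      then have "x * s \<omega> < a * s \<omega>"
        using assms \<omega> by simp
      then have "0 < L \<omega> - x * s \<omega>"
        using \<omega> by linarith
      moreover have "0 \<le> L \<omega>"
        using \<omega> a_pos by (meson order_trans mult_nonneg_nonneg less_imp_le)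
      ultimately show ?thesis
        using convex_on_diff_le_deriv_mult[OF convex deriv, of "L \<omega> - x * s \<omega>" "L \<omega>"] by simp
    qed simp
    ultimately show ?thesis
      by (simp add: algebra_simps)
  qed
  have x: "x \<in> {0..a}" "0 \<in> {0..a}"
    using assms by auto
  have integrable_cost: "integrable M (\<lambda>\<omega>. C (A \<omega> + y * K) + C (L \<omega> - y * s \<omega>))"
    if "y \<in> {0..a}" for y
    using integrable_shift_cost_prev[OF that] integrable_shift_cost_cur[OF that]
    by (rule Bochner_Integration.integrable_add)
  have "shift_cost x - shift_cost 0
      = (\<integral>\<omega>. C (A \<omega> + x * K) + C (L \<omega> - x * s \<omega>) - (C (A \<omega>) + C (L \<omega>)) \<partial>M)"
    using Bochner_Integration.integral_diff[OF integrable_cost[OF x(1)] integrable_cost[OF x(2)]]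
    by (simp add: shift_cost_def)
  also have "\<dots> \<le> (\<integral>\<omega>. x * (K * C' (A \<omega> + x * K) - s \<omega> * C' (L \<omega> - x * s \<omega>)) \<partial>M)"
    using pointwise integrable_cost[OF x(1)] integrable_cost[OF x(2)]
      integrable_shift_slope_prev[OF x(1)] integrable_shift_slope_cur[OF x(1)]
    by (intro integral_mono) auto
  also have "\<dots> = x * shift_slope x"
    by (simp add: shift_slope_def)
  finally show ?thesis .
qed

lemma shift_cost_decreases:
  assumes "shift_slope 0 < 0"
  obtains x where "0 < x" "x \<le> a" "shift_cost x < shift_cost 0"
proof -
  have "\<forall>\<^sub>F x in at_right 0. shift_slope x < 0"
    using continuous_on_Icc_at_rightD[OF continuous_on_shift_slope a_pos] assms by (rule order_tendstoD)
  moreover have "\<forall>\<^sub>F x in at_right 0. 0 < x \<and> x < (a::real)"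
    using a_pos by (auto simp: eventually_at_right_field)
  ultimately obtain x where x: "0 < x" "x < a" "shift_slope x < 0"
    using eventually_happens'[OF trivial_limit_at_right_real eventually_conj] by blast
  then have "shift_cost x - shift_cost 0 < 0"
    using shift_cost_diff_le[OF x(1,2)] mult_pos_neg[OF x(1,3)] by linarith
  with x that show ?thesis by simp
qed

end

definition active_count :: "'a measure \<Rightarrow> nat \<Rightarrow> nat \<Rightarrow> nat \<Rightarrow> (nat \<Rightarrow> real) \<Rightarrow> (real \<Rightarrow> real)
    \<Rightarrow> (nat \<Rightarrow> nat \<Rightarrow> nat \<Rightarrow> 'a \<Rightarrow> real) \<Rightarrow> nat \<Rightarrow> real" where
  "active_count Mu N M T S C' I t = (\<Sum>j<M. real (card (active_set Mu N M T S C' I t j)))"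

definition active_demand :: "'a measure \<Rightarrow> nat \<Rightarrow> nat \<Rightarrow> nat \<Rightarrow> (nat \<Rightarrow> real) \<Rightarrow> (real \<Rightarrow> real)
    \<Rightarrow> (nat \<Rightarrow> nat \<Rightarrow> nat \<Rightarrow> 'a \<Rightarrow> real) \<Rightarrow> nat \<Rightarrow> 'a \<Rightarrow> real" where
  "active_demand Mu N M T S C' I t \<omega> = (\<Sum>j<M. \<Sum>k\<in>active_set Mu N M T S C' I t j. I k t j \<omega>)"

lemma active_set_subset: "active_set Mu N M T S C' I t j \<subseteq> {..<N}"
  unfolding active_set_def by (rule Collect_restrict)

lemma finite_active_set [simp]: "finite (active_set Mu N M T S C' I t j)"
  by (rule finite_subset[OF active_set_subset]) simp

lemma objective_eq_shifted_loads:
  "objective Mu N M T S C C' I t x =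
    (\<integral>\<omega>. C (load N M S I (prev_slot T t) \<omega> + x * active_count Mu N M T S C' I t)
       + C (load N M S I t \<omega> - x * active_demand Mu N M T S C' I t \<omega>) \<partial>Mu)"
  unfolding objective_def active_count_def active_demand_def
  by (simp add: sum_distrib_left sum_distrib_right mult.commute)

lemma active_count_pos:
  assumes "m < M" "active_set Mu N M T S C' I t m \<noteq> {}"
  shows "0 < active_count Mu N M T S C' I t"
  unfolding active_count_def using assms
  by (intro sum_pos2[of _ m]) (auto simp: card_gt_0_iff)

lemma active_demand_bounds:
  assumes "\<And>n j. n < N \<Longrightarrow> j < M \<Longrightarrow> 0 \<le> I n t j \<omega> \<and> I n t j \<omega> \<le> 1"
  shows "0 \<le> active_demand Mu N M T S C' I t \<omega>"
    and "active_demand Mu N M T S C' I t \<omega> \<le> active_count Mu N M T S C' I t"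
proof -
  have unit: "0 \<le> I k t j \<omega> \<and> I k t j \<omega> \<le> 1"
    if "j \<in> {..<M}" "k \<in> active_set Mu N M T S C' I t j" for j k
    using assms subsetD[OF active_set_subset that(2)] that(1) by simp
  then show "0 \<le> active_demand Mu N M T S C' I t \<omega>"
    unfolding active_demand_def by (intro sum_nonneg) auto
  have "(\<Sum>k\<in>active_set Mu N M T S C' I t j. I k t j \<omega>) \<le> real (card (active_set Mu N M T S C' I t j))"
    if "j \<in> {..<M}" for j
    using sum_mono[of _ "\<lambda>k. I k t j \<omega>" "\<lambda>_. 1"] unit[OF that] by simp
  then show "active_demand Mu N M T S C' I t \<omega> \<le> active_count Mu N M T S C' I t"
    unfolding active_demand_def active_count_def by (rule sum_mono)
qed

lemma load_bounds:
  assumes "\<And>j. j < M \<Longrightarrow> 0 \<le> S j"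
    and "\<And>n j. n < N \<Longrightarrow> j < M \<Longrightarrow> 0 \<le> I n r j \<omega> \<and> I n r j \<omega> \<le> 1"
  shows "0 \<le> load N M S I r \<omega>" and "load N M S I r \<omega> \<le> real N * (\<Sum>j<M. S j)"
proof -
  have summand: "0 \<le> S j * I n r j \<omega> \<and> S j * I n r j \<omega> \<le> S j"
    if "j \<in> {..<M}" "n \<in> {..<N}" for j n
    using assms(1)[of j] assms(2)[of n j] that by (simp add: mult_left_le)
  then show "0 \<le> load N M S I r \<omega>"
    unfolding load_def by (intro sum_nonneg) auto
  have "load N M S I r \<omega> \<le> (\<Sum>j<M. \<Sum>n<N. S j)"
    unfolding load_def using summand by (intro sum_mono) auto
  also have "\<dots> = real N * (\<Sum>j<M. S j)"
    by (simp add: sum_distrib_left)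
  finally show "load N M S I r \<omega> \<le> real N * (\<Sum>j<M. S j)" .
qed

lemma scaled_active_demand_le_load:
  assumes "0 \<le> a" "\<And>j. j < M \<Longrightarrow> a \<le> S j"
    and "\<And>n j. n < N \<Longrightarrow> j < M \<Longrightarrow> 0 \<le> I n t j \<omega>"
  shows "a * active_demand Mu N M T S C' I t \<omega> \<le> load N M S I t \<omega>"
proof -
  have "a * active_demand Mu N M T S C' I t \<omega>
      = (\<Sum>j<M. \<Sum>k\<in>active_set Mu N M T S C' I t j. a * I k t j \<omega>)"
    by (simp add: active_demand_def sum_distrib_left)
  also have "\<dots> \<le> (\<Sum>j<M. \<Sum>k\<in>active_set Mu N M T S C' I t j. S j * I k t j \<omega>)"
    using assms(2,3) subsetD[OF active_set_subset[of Mu N M T S C' I t]]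
    by (intro sum_mono mult_right_mono) auto
  also have "\<dots> \<le> (\<Sum>j<M. \<Sum>k<N. S j * I k t j \<omega>)"
  proof (intro sum_mono sum_mono2 active_set_subset)
    fix j k assume "j \<in> {..<M}" "k \<in> {..<N} - active_set Mu N M T S C' I t j"
    then show "0 \<le> S j * I k t j \<omega>"
      using assms order.trans[OF assms(1) assms(2)] by (simp add: mult_nonneg_nonneg)
  qed simp
  also have "\<dots> = load N M S I t \<omega>"
    by (simp add: load_def)
  finally show ?thesis .
qed

lemma borel_measurable_load:
  assumes "\<And>n j. n < N \<Longrightarrow> j < M \<Longrightarrow> I n r j \<in> borel_measurable Mu"
  shows "load N M S I r \<in> borel_measurable Mu"
  unfolding load_def[abs_def] using assms by (auto intro!: borel_measurable_sum)

lemma borel_measurable_active_demand: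
  assumes "\<And>n j. n < N \<Longrightarrow> j < M \<Longrightarrow> I n t j \<in> borel_measurable Mu"
  shows "active_demand Mu N M T S C' I t \<in> borel_measurable Mu"
  unfolding active_demand_def[abs_def] using assms subsetD[OF active_set_subset[of Mu N M T S C' I t]]
  by (auto intro!: borel_measurable_sum)

lemma active_slope_pos:
  assumes "m < M" "active_set Mu N M T S C' I t m \<noteq> {}"
  shows "0 < (\<integral>\<omega>. active_demand Mu N M T S C' I t \<omega> * C' (load N M S I t \<omega>)
      - active_count Mu N M T S C' I t * C' (load N M S I (prev_slot T t) \<omega>) \<partial>Mu)"
proof -
  define B where "B = active_set Mu N M T S C' I t"
  define f where "f k j \<omega> = I k t j \<omega> * C' (load N M S I t \<omega>) - C' (load N M S I (prev_slot T t) \<omega>)"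
    for k j \<omega>
  have pos: "0 < (\<integral>\<omega>. f k j \<omega> \<partial>Mu)" if "k \<in> B j" for k j
    using that by (simp add: B_def active_set_def f_def)
  \<comment> \<open>Integrability is free: a non-integrable function has Bochner integral \<open>0\<close>.\<close>
  then have integrable: "integrable Mu (f k j)" if "k \<in> B j" for k j
    using not_integrable_integral_eq that by fastforce
  have "0 < (\<Sum>j<M. \<Sum>k\<in>B j. \<integral>\<omega>. f k j \<omega> \<partial>Mu)"
    using assms pos unfolding B_def
    by (intro sum_pos2[of _ m] sum_pos sum_nonneg) (auto intro: less_imp_le)
  also have "\<dots> = (\<integral>\<omega>. (\<Sum>j<M. \<Sum>k\<in>B j. f k j \<omega>) \<partial>Mu)"
    using integrable by (simp add: Bochner_Integration.integral_sum Bochner_Integration.integrable_sum)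
  also have "\<dots> = (\<integral>\<omega>. active_demand Mu N M T S C' I t \<omega> * C' (load N M S I t \<omega>)
      - active_count Mu N M T S C' I t * C' (load N M S I (prev_slot T t) \<omega>) \<partial>Mu)"
    by (simp add: f_def B_def active_demand_def active_count_def sum_subtractf sum_distrib_right)
  finally show ?thesis .
qed

lemma load_shift_demand_model:
  assumes "finite_measure Mu" "t < T" "m < M" "active_set Mu N M T S C' I t m \<noteq> {}"
    and "0 < a" "\<And>j. j < M \<Longrightarrow> a \<le> S j"
    and "\<And>n r j. n < N \<Longrightarrow> r < T \<Longrightarrow> j < M \<Longrightarrow> I n r j \<in> borel_measurable Mu"
    and "\<And>n r j \<omega>. n < N \<Longrightarrow> r < T \<Longrightarrow> j < M \<Longrightarrow> \<omega> \<in> space Mu \<Longrightarrow>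
      0 \<le> I n r j \<omega> \<and> I n r j \<omega> \<le> 1"
    and "convex_on {0..} C" "\<And>x. 0 \<le> x \<Longrightarrow> (C has_real_derivative C' x) (at x within {0..})"
    and "continuous_on {0..} C'"
  shows "load_shift Mu (load N M S I (prev_slot T t)) (load N M S I t)
    (active_demand Mu N M T S C' I t) (active_count Mu N M T S C' I t) a (real N * (\<Sum>j<M. S j)) C C'"
proof -
  have "prev_slot T t < T"
    using assms(2) by (simp add: prev_slot_def)
  moreover have "\<And>j. j < M \<Longrightarrow> 0 \<le> S j"
    using assms(5,6) by (meson less_imp_le order.trans)
  ultimately show ?thesis
    using assms active_count_pos[OF assms(3,4)]
    by (intro load_shift.intro load_shift_axioms.intro)
      (auto intro: borel_measurable_load borel_measurable_active_demand load_bounds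
        active_demand_bounds scaled_active_demand_le_load)
qed

theorem lemma3:
  fixes Mu :: "'a measure"
    and N M T :: nat
    and S :: "nat \<Rightarrow> real"
    and P :: "nat \<Rightarrow> nat \<Rightarrow> nat \<Rightarrow> real"
    and I :: "nat \<Rightarrow> nat \<Rightarrow> nat \<Rightarrow> 'a \<Rightarrow> real"
    and C C' :: "real \<Rightarrow> real"
    and D :: "nat \<Rightarrow> real \<Rightarrow> real"
    and t m :: nat
  assumes prob: "prob_space Mu"
    and T_pos: "0 < T" and M_pos: "0 < M"
    and S_pos: "\<And>j. j < M \<Longrightarrow> 0 < S j"
    and P_nonneg: "\<And>n s j. n < N \<Longrightarrow> s < T \<Longrightarrow> j < M \<Longrightarrow> 0 \<le> P n s j"
    and P_sum: "\<And>n s. n < N \<Longrightarrow> s < T \<Longrightarrow> (\<Sum>j<M. P n s j) \<le> 1"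
    and I_meas: "\<And>n s j. n < N \<Longrightarrow> s < T \<Longrightarrow> j < M \<Longrightarrow> I n s j \<in> borel_measurable Mu"
    and I_01: "\<And>n s j \<omega>. n < N \<Longrightarrow> s < T \<Longrightarrow> j < M \<Longrightarrow> \<omega> \<in> space Mu \<Longrightarrow> I n s j \<omega> \<in> {0, 1}"
    and I_prob: "\<And>n s j. n < N \<Longrightarrow> s < T \<Longrightarrow> j < M \<Longrightarrow>
                   measure Mu {\<omega> \<in> space Mu. I n s j \<omega> = 1} = P n s j"
    and I_one: "\<And>n s \<omega>. n < N \<Longrightarrow> s < T \<Longrightarrow> \<omega> \<in> space Mu \<Longrightarrow> (\<Sum>j<M. I n s j \<omega>) \<le> 1"
    and I_indep: "\<And>s. s < T \<Longrightarrow>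
                   prob_space.indep_vars Mu (\<lambda>_. PiM {..<M} (\<lambda>_. borel))
                     (\<lambda>n \<omega>. \<lambda>j\<in>{..<M}. I n s j \<omega>) {..<N}"
    and D0: "D 0 = C" and D1: "D 1 = C'"
    and D_deriv: "\<And>k x. 0 \<le> x \<Longrightarrow> (D k has_real_derivative D (Suc k) x) (at x within {0..})"
    and C_nonneg: "\<And>x. 0 \<le> x \<Longrightarrow> 0 \<le> C x"
    and C_strict_convex: "strictly_convex_on {0..} C"
    and C_mono: "mono_on {0..} C"
    and t_lt: "t < T" and m_lt: "m < M"
    and B_ne: "active_set Mu N M T S C' I t m \<noteq> {}"
  shows "(\<exists>xh. is_arg_min (objective Mu N M T S C C' I t)
                 (\<lambda>x. 0 \<le> x \<and> x \<le> Min (S ` {..<M})) xh)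
       \<and> (\<forall>xh. is_arg_min (objective Mu N M T S C C' I t)
                 (\<lambda>x. 0 \<le> x \<and> x \<le> Min (S ` {..<M})) xh \<longrightarrow> 0 < xh)"
proof -
  define Smin where "Smin = Min (S ` {..<M})"
  have "0 < Smin" "\<And>j. j < M \<Longrightarrow> Smin \<le> S j"
    unfolding Smin_def using M_pos S_pos by (subst Min_gr_iff) auto
  moreover have "0 \<le> I n r j \<omega> \<and> I n r j \<omega> \<le> 1"
    if "n < N" "r < T" "j < M" "\<omega> \<in> space Mu" for n r j \<omega>
    using I_01[OF that] by auto
  ultimately interpret load_shift Mu "load N M S I (prev_slot T t)" "load N M S I t"
    "active_demand Mu N M T S C' I t" "active_count Mu N M T S C' I t" Smin
    "real N * (\<Sum>j<M. S j)" C C'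
    using D_deriv[of _ 0] D_deriv[of _ 1] D0 D1
    by (intro load_shift_demand_model[OF prob_space.axioms(1)[OF prob] t_lt m_lt B_ne] I_meas
        strictly_convex_on_imp_convex_on[OF C_strict_convex] DERIV_continuous_on) auto
  have "shift_slope 0 = - (\<integral>\<omega>. active_demand Mu N M T S C' I t \<omega> * C' (load N M S I t \<omega>)
      - active_count Mu N M T S C' I t * C' (load N M S I (prev_slot T t) \<omega>) \<partial>Mu)"
    by (simp add: shift_slope_def flip: integral_minus)
  then have "shift_slope 0 < 0"
    using active_slope_pos[OF m_lt B_ne] by linarith
  then obtain x where "0 < x" "x \<le> Smin" "shift_cost x < shift_cost 0"
    by (rule shift_cost_decreases)
  moreover have "objective Mu N M T S C C' I t = shift_cost"
    by (simp add: fun_eq_iff objective_eq_shifted_loads shift_cost_def)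
  ultimately show ?thesis
    using is_arg_min_Icc_pos[OF continuous_on_shift_cost] by (simp add: Smin_def)
qed

end
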